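(* Let $N\ge 2$, $x_0<x_1<\dots<x_N$, $h_i=x_i-x_{i-1}$, and let $f_1,\dots,f_N\in\mathbb{R}$ be a histogram. Let $I=[x_0,x_N]$, $I_i=[x_{i-1},x_i)$ for $i<N$, $I_N=[x_{N-1},x_N]$, and for $i=1,\dots,N$ let $L_i(x)=a_ix+b_i$ with $a_i=\frac{x_i-x_{i-1}}{x_N-x_0}$, $b_i=\frac{x_Nx_{i-1}-x_0x_i}{x_N-x_0}$, let $\alpha_i$ be arbitrary with $|\alpha_i|<1$, and let $q_i:I\to\mathbb{R}$ be Lipschitz continuous. Let $f$ be the unique bounded function on $I$ with $f(x)=\alpha_if(L_i^{-1}(x))+q_i(L_i^{-1}(x))$ for $x\in I_i$, $i=1,\dots,N$ (the fractal function of the IFS with maps $L_i(x)$, $F_i(x,y)=\alpha_iy+q_i(x)$). Then $\int_{x_{i-1}}^{x_i}f(x)\,dx=h_if_i$ for all $i=1,\dots,N$ if and only if $$\int_Iq_i(x)\,dx=\frac{h_if_i-\alpha_ia_i\sum_{j=1}^Nh_jf_j}{a_i},\qquad i=1,\dots,N.$$ *)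

theory Defs
  imports "HOL-Analysis.Analysis"
begin

text \<open>Nodes x 0 < ... < x N; affine maps L_i(t) = a_i t + b_i mapping [x_0,x_N] onto [x_(i-1),x_i].\<close>

definition ifs_a :: "(nat \<Rightarrow> real) \<Rightarrow> nat \<Rightarrow> nat \<Rightarrow> real" where
  "ifs_a x N i = (x i - x (i - 1)) / (x N - x 0)"

definition ifs_b :: "(nat \<Rightarrow> real) \<Rightarrow> nat \<Rightarrow> nat \<Rightarrow> real" where
  "ifs_b x N i = (x N * x (i - 1) - x 0 * x i) / (x N - x 0)"

definition ifs_L :: "(nat \<Rightarrow> real) \<Rightarrow> nat \<Rightarrow> nat \<Rightarrow> real \<Rightarrow> real" where
  "ifs_L x N i t = ifs_a x N i * t + ifs_b x N i"

definition ifs_Linv :: "(nat \<Rightarrow> real) \<Rightarrow> nat \<Rightarrow> nat \<Rightarrow> real \<Rightarrow> real" where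
  "ifs_Linv x N i t = (t - ifs_b x N i) / ifs_a x N i"

definition ifs_I :: "(nat \<Rightarrow> real) \<Rightarrow> nat \<Rightarrow> nat \<Rightarrow> real set" where
  "ifs_I x N i = (if i < N then {x (i - 1)..<x i} else {x (i - 1)..x i})"

end

theory Submission
  imports Defs
begin

text \<open>
  Since L_i maps [x_0, x_N] affinely onto [x_(i-1), x_i] with slope a_i, integrating the
  functional equation of f over that piece gives
    integral [x_(i-1), x_i] f = alpha_i a_i (integral [x_0, x_N] f) + a_i (integral [x_0, x_N] q_i).
  Together with additivity of the integral this is a linear system relating the piecewise
  integrals of f to the integrals of the q_i, and it is nondegenerate because
  sum alpha_i a_i < sum a_i = 1. Integrability of f, needed to start, holds because f is the
  uniform limit of the iterates of the Read-Bajraktarevic operator started at 0; they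
  converge geometrically with ratio max |alpha_i|.
\<close>

lemma integrable_geometric_uniform_limit:
  fixes f :: "'a::euclidean_space \<Rightarrow> real"
  assumes approx: "\<And>n t. t \<in> cbox a b \<Longrightarrow> \<bar>f t - g n t\<bar> \<le> c ^ n * B"
    and g: "\<And>n. g n integrable_on cbox a b"
    and c: "0 \<le> c" "c < 1" and B: "0 \<le> B"
  shows "f integrable_on cbox a b"
proof (rule integrable_uniform_limit)
  fix e :: real assume e: "e > 0"
  obtain n where n: "c ^ n < e / (B + 1)"
    using real_arch_pow_inv[of "e / (B + 1)" c] e B c by auto
  have "c ^ n * B \<le> c ^ n * (B + 1)" using c by (intro mult_left_mono) auto
  also have "\<dots> \<le> e" using n B by (simp add: field_simps)
  finally show "\<exists>h. (\<forall>t\<in>cbox a b. norm (f t - h t) \<le> e) \<and> h integrable_on cbox a b"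
    using approx g by (intro exI[of _ "g n"]) (fastforce intro: order_trans)
qed

lemma linear_moment_system_iff:
  fixes P Q a \<alpha> h :: "'i \<Rightarrow> real" and F :: real
  assumes "finite A"
    and P: "\<And>i. i \<in> A \<Longrightarrow> P i = \<alpha> i * a i * F + a i * Q i"
    and F: "F = (\<Sum>i\<in>A. P i)"
    and a: "\<And>i. i \<in> A \<Longrightarrow> a i \<noteq> 0"
    and nondegenerate: "(\<Sum>i\<in>A. \<alpha> i * a i) \<noteq> 1"
  shows "(\<forall>i\<in>A. P i = h i) \<longleftrightarrow> (\<forall>i\<in>A. Q i = (h i - \<alpha> i * a i * (\<Sum>j\<in>A. h j)) / a i)"
proof
  assume h: "\<forall>i\<in>A. P i = h i"
  then have "F = (\<Sum>j\<in>A. h j)" unfolding F by simp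
  then have "h i = \<alpha> i * a i * (\<Sum>j\<in>A. h j) + a i * Q i" if "i \<in> A" for i
    using P[OF that] h that by simp
  then show "\<forall>i\<in>A. Q i = (h i - \<alpha> i * a i * (\<Sum>j\<in>A. h j)) / a i"
    using a by (simp add: field_simps)
next
  define S where "S = (\<Sum>j\<in>A. h j)"
  assume Q: "\<forall>i\<in>A. Q i = (h i - \<alpha> i * a i * (\<Sum>j\<in>A. h j)) / a i"
  have P': "P i = \<alpha> i * a i * (F - S) + h i" if "i \<in> A" for i
  proof -
    have "a i * Q i = h i - \<alpha> i * a i * S"
      using Q a[OF that] that unfolding S_def by simp
    then show ?thesis using P[OF that] by (simp add: algebra_simps)
  qed
  have "F = (\<Sum>i\<in>A. \<alpha> i * a i * (F - S) + h i)"
    using F P' by (metis (no_types, lifting) sum.cong)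
  also have "\<dots> = (\<Sum>i\<in>A. \<alpha> i * a i) * (F - S) + S"
    unfolding S_def by (simp add: sum.distrib sum_distrib_right)
  finally have "(F - S) * (1 - (\<Sum>i\<in>A. \<alpha> i * a i)) = 0"
    by (simp add: algebra_simps)
  then have "F = S" using nondegenerate by simp
  then show "\<forall>i\<in>A. P i = h i" using P' by simp
qed

locale ifs_partition =
  fixes x :: "nat \<Rightarrow> real" and N :: nat
  assumes N_pos: "N \<ge> 1"
    and nodes_step: "\<And>i. 1 \<le> i \<Longrightarrow> i \<le> N \<Longrightarrow> x (i - 1) < x i"
begin

lemma nodes_less: "j < k \<Longrightarrow> k \<le> N \<Longrightarrow> x j < x k"
proof (induction k)
  case (Suc k)
  then show ?case
    using nodes_step[of "Suc k"] by (auto simp: less_Suc_eq)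
qed simp

lemma nodes_le: "j \<le> k \<Longrightarrow> k \<le> N \<Longrightarrow> x j \<le> x k"
  using nodes_less[of j k] by (cases "j = k") auto

lemma x0_less_xN: "x 0 < x N"
  using nodes_less N_pos by simp

lemma ifs_I_subset: "ifs_I x N i \<subseteq> {x (i - 1)..x i}"
  unfolding ifs_I_def by auto

lemma ifs_I_cover:
  assumes "t \<in> {x 0..x N}"
  shows "\<exists>i\<in>{1..N}. t \<in> ifs_I x N i"
proof (cases "t < x N")
  case True
  have "n \<le> N \<Longrightarrow> t < x n \<Longrightarrow> \<exists>i\<in>{1..n}. x (i - 1) \<le> t \<and> t < x i" for n
  proof (induction n)
    case (Suc n)
    then show ?case
      by (cases "t < x n") (force, intro bexI[of _ "Suc n"], auto)
  qed (use assms in simp)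
  then show ?thesis using True unfolding ifs_I_def by fastforce
next
  case False
  then show ?thesis
    using assms N_pos nodes_step[of N] unfolding ifs_I_def by (intro bexI[of _ N]) auto
qed

lemma ifs_I_disjoint:
  assumes "i \<in> {1..N}" "j \<in> {1..N}" "t \<in> ifs_I x N i" "t \<in> ifs_I x N j"
  shows "i = j"
proof (rule ccontr)
  have less: False if "i < j" "t \<in> ifs_I x N i" "t \<in> ifs_I x N j" "j \<le> N" for i j
  proof -
    have "t < x i" "x (j - 1) \<le> t"
      using that unfolding ifs_I_def by (auto split: if_splits)
    moreover have "x i \<le> x (j - 1)" using nodes_le[of i "j - 1"] that by auto
    ultimately show False by simp
  qed
  assume "i \<noteq> j"
  then show False
    using less[of i j] less[of j i] assms by (cases "i < j") auto
qed

lemma ifs_a_pos: "i \<in> {1..N} \<Longrightarrow> ifs_a x N i > 0"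
  unfolding ifs_a_def using x0_less_xN nodes_step by simp

lemma sum_ifs_a: "(\<Sum>i=1..N. ifs_a x N i) = 1"
proof -
  have "(\<Sum>i=1..n. ifs_a x N i) = (x n - x 0) / (x N - x 0)" for n
    using x0_less_xN by (induction n) (auto simp: ifs_a_def field_simps)
  then show ?thesis using x0_less_xN by simp
qed

lemma ifs_L_x0: "ifs_a x N i * x 0 + ifs_b x N i = x (i - 1)"
  and ifs_L_xN: "ifs_a x N i * x N + ifs_b x N i = x i"
  using x0_less_xN unfolding ifs_a_def ifs_b_def
  by (simp_all add: divide_simps) (simp_all add: algebra_simps)

lemma ifs_Linv_in_interval:
  assumes "i \<in> {1..N}" "t \<in> {x (i - 1)..x i}"
  shows "ifs_Linv x N i t \<in> {x 0..x N}"
  using assms ifs_a_pos[OF assms(1)] ifs_L_x0[of i] ifs_L_xN[of i]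
  unfolding ifs_Linv_def by (auto simp: field_simps)

lemma has_integral_compose_ifs_Linv:
  assumes i: "i \<in> {1..N}" and g: "(g has_integral J) {x 0..x N}"
  shows "((\<lambda>t. g (ifs_Linv x N i t)) has_integral (ifs_a x N i * J)) {x (i - 1)..x i}"
proof -
  define a b where "a = ifs_a x N i" and "b = ifs_b x N i"
  have a: "a > 0" using ifs_a_pos[OF i] by (simp add: a_def)
  have "((\<lambda>t. g ((1 / a) *\<^sub>R t + - b / a)) has_integral (J /\<^sub>R (1 / a) ^ DIM(real)))
          (cbox ((x 0 - - b / a) /\<^sub>R (1 / a)) ((x N - - b / a) /\<^sub>R (1 / a)))"
    using g a by (intro has_integral_affinity') auto
  moreover have "cbox ((x 0 - - b / a) /\<^sub>R (1 / a)) ((x N - - b / a) /\<^sub>R (1 / a)) = {x (i - 1)..x i}"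
    using a ifs_L_x0[of i] ifs_L_xN[of i] unfolding a_def b_def by (simp add: algebra_simps)
  moreover have "(\<lambda>t. g ((1 / a) *\<^sub>R t + - b / a)) = (\<lambda>t. g (ifs_Linv x N i t))"
    unfolding ifs_Linv_def a_def b_def by (simp add: diff_divide_distrib)
  moreover have "J /\<^sub>R (1 / a) ^ DIM(real) = ifs_a x N i * J"
    by (simp add: a_def)
  ultimately show ?thesis by (simp only:)
qed

lemma integral_nodes_sum:
  fixes f :: "real \<Rightarrow> real"
  assumes "f integrable_on {x 0..x N}"
  shows "integral {x 0..x N} f = (\<Sum>i=1..N. integral {x (i - 1)..x i} f)"
proof -
  have "integral {x 0..x n} f = (\<Sum>i=1..n. integral {x (i - 1)..x i} f)" if "n \<le> N" for n
    using that
  proof (induction n)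
    case (Suc n)
    have "x 0 \<le> x n" "x n \<le> x (Suc n)" "x (Suc n) \<le> x N"
      using nodes_le Suc.prems by auto
    then have "integral {x 0..x n} f + integral {x n..x (Suc n)} f = integral {x 0..x (Suc n)} f"
      by (intro Henstock_Kurzweil_Integration.integral_combine
          integrable_subinterval_real[OF assms]) auto
    then show ?case using Suc by simp
  qed simp
  then show ?thesis by simp
qed

end

locale fractal_function = ifs_partition +
  fixes \<alpha> :: "nat \<Rightarrow> real" and q :: "nat \<Rightarrow> real \<Rightarrow> real" and f :: "real \<Rightarrow> real"
  assumes alpha: "\<And>i. i \<in> {1..N} \<Longrightarrow> \<bar>\<alpha> i\<bar> < 1"
    and q_integrable: "\<And>i. i \<in> {1..N} \<Longrightarrow> q i integrable_on {x 0..x N}"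
    and f_bounded: "bounded (f ` {x 0..x N})"
    and f_eq: "\<And>i t. i \<in> {1..N} \<Longrightarrow> t \<in> ifs_I x N i \<Longrightarrow>
                 f t = \<alpha> i * f (ifs_Linv x N i t) + q i (ifs_Linv x N i t)"
begin

definition read_bajraktarevic_op :: "(real \<Rightarrow> real) \<Rightarrow> real \<Rightarrow> real" where
  "read_bajraktarevic_op g t = (\<Sum>i=1..N. if t \<in> ifs_I x N i
     then \<alpha> i * g (ifs_Linv x N i t) + q i (ifs_Linv x N i t) else 0)"

lemma read_bajraktarevic_op_on_piece:
  assumes i: "i \<in> {1..N}" and t: "t \<in> ifs_I x N i"
  shows "read_bajraktarevic_op g t = \<alpha> i * g (ifs_Linv x N i t) + q i (ifs_Linv x N i t)"
proof -
  have "read_bajraktarevic_op g t =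
          (\<Sum>j=1..N. if j = i then \<alpha> i * g (ifs_Linv x N i t) + q i (ifs_Linv x N i t) else 0)"
    unfolding read_bajraktarevic_op_def
  proof (rule sum.cong)
    fix j assume j: "j \<in> {1..N}"
    show "(if t \<in> ifs_I x N j then \<alpha> j * g (ifs_Linv x N j t) + q j (ifs_Linv x N j t) else 0)
        = (if j = i then \<alpha> i * g (ifs_Linv x N i t) + q i (ifs_Linv x N i t) else 0)"
    proof (cases "t \<in> ifs_I x N j")
      case True
      then show ?thesis using ifs_I_disjoint[OF i j t] by simp
    next
      case False
      then show ?thesis using t by auto
    qed
  qed simp
  then show ?thesis using i by simp
qed

lemma read_bajraktarevic_op_integrable:
  assumes g: "g integrable_on {x 0..x N}"
  shows "read_bajraktarevic_op g integrable_on {x 0..x N}"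
  unfolding read_bajraktarevic_op_def
proof (rule Henstock_Kurzweil_Integration.integrable_sum)
  fix i assume i: "i \<in> {1..N}"
  let ?h = "\<lambda>t. \<alpha> i * g (ifs_Linv x N i t) + q i (ifs_Linv x N i t)"
  have "?h integrable_on {x (i - 1)..x i}"
    using has_integral_compose_ifs_Linv[OF i integrable_integral[OF g]]
      has_integral_compose_ifs_Linv[OF i integrable_integral[OF q_integrable[OF i]]]
    by (intro integrable_add integrable_on_mult_right) (auto simp: integrable_on_def)
  then have "(\<lambda>t. if t \<in> {x (i - 1)..x i} then ?h t else 0) integrable_on {x (i - 1)..x i}"
    by (rule integrable_spike[where S="{}"]) auto
  then have "(\<lambda>t. if t \<in> {x (i - 1)..x i} then ?h t else 0) integrable_on {x 0..x N}"
    by (rule integrable_on_superset) (use nodes_le[of 0 "i - 1"] nodes_le[of i N] i in auto)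
  then show "(\<lambda>t. if t \<in> ifs_I x N i then ?h t else 0) integrable_on {x 0..x N}"
    by (rule integrable_spike[where S="{x i}"]) (auto simp: ifs_I_def)
qed simp

lemma read_bajraktarevic_iterates_approx:
  assumes B: "\<And>t. t \<in> {x 0..x N} \<Longrightarrow> \<bar>f t\<bar> \<le> B"
    and c: "\<And>i. i \<in> {1..N} \<Longrightarrow> \<bar>\<alpha> i\<bar> \<le> c"
    and t: "t \<in> {x 0..x N}"
  shows "\<bar>f t - (read_bajraktarevic_op ^^ n) (\<lambda>_. 0) t\<bar> \<le> c ^ n * B"
  using t
proof (induction n arbitrary: t)
  case (Suc n)
  let ?g = "(read_bajraktarevic_op ^^ n) (\<lambda>_. 0)"
  obtain i where i: "i \<in> {1..N}" "t \<in> ifs_I x N i"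
    using ifs_I_cover Suc.prems by blast
  define s where "s = ifs_Linv x N i t"
  have s: "s \<in> {x 0..x N}"
    unfolding s_def using ifs_Linv_in_interval[OF i(1)] ifs_I_subset i(2) by blast
  have "\<bar>f t - (read_bajraktarevic_op ^^ Suc n) (\<lambda>_. 0) t\<bar> = \<bar>\<alpha> i\<bar> * \<bar>f s - ?g s\<bar>"
    using f_eq[OF i] read_bajraktarevic_op_on_piece[OF i, of ?g]
    by (simp add: s_def abs_mult[symmetric] algebra_simps)
  also have "\<dots> \<le> c * (c ^ n * B)"
    using c[OF i(1)] Suc.IH[OF s] by (intro mult_mono) auto
  finally show ?case by simp
qed (use B in simp)

lemma f_integrable: "f integrable_on {x 0..x N}"
proof -
  obtain B where B: "\<And>t. t \<in> {x 0..x N} \<Longrightarrow> \<bar>f t\<bar> \<le> B"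
    using f_bounded unfolding bounded_iff by (metis image_eqI real_norm_def)
  define c where "c = Max ((\<lambda>i. \<bar>\<alpha> i\<bar>) ` {1..N})"
  have c: "\<And>i. i \<in> {1..N} \<Longrightarrow> \<bar>\<alpha> i\<bar> \<le> c" unfolding c_def by auto
  have c1: "c < 1" unfolding c_def using alpha N_pos by (subst Max_less_iff) auto
  have c0: "0 \<le> c" and B0: "0 \<le> B" using c[of 1] B[of "x 0"] N_pos x0_less_xN by auto
  have iterates: "(read_bajraktarevic_op ^^ n) (\<lambda>_. 0) integrable_on cbox (x 0) (x N)" for n
    by (induction n) (auto intro: read_bajraktarevic_op_integrable)
  have "f integrable_on cbox (x 0) (x N)"
    by (rule integrable_geometric_uniform_limit[OF _ iterates c0 c1 B0])
      (use read_bajraktarevic_iterates_approx[OF B c] in simp)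
  then show ?thesis by simp
qed

lemma integral_on_ifs_piece:
  assumes i: "i \<in> {1..N}"
  shows "integral {x (i - 1)..x i} f
           = \<alpha> i * ifs_a x N i * integral {x 0..x N} f + ifs_a x N i * integral {x 0..x N} (q i)"
proof -
  have h: "((\<lambda>t. \<alpha> i * f (ifs_Linv x N i t) + q i (ifs_Linv x N i t)) has_integral
          \<alpha> i * (ifs_a x N i * integral {x 0..x N} f) + ifs_a x N i * integral {x 0..x N} (q i))
        {x (i - 1)..x i}"
    using has_integral_compose_ifs_Linv[OF i integrable_integral[OF f_integrable]]
      has_integral_compose_ifs_Linv[OF i integrable_integral[OF q_integrable[OF i]]]
    by (intro has_integral_add has_integral_mult_right)
  have "(f has_integral
          \<alpha> i * (ifs_a x N i * integral {x 0..x N} f) + ifs_a x N i * integral {x 0..x N} (q i))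
        {x (i - 1)..x i}"
    by (rule has_integral_spike[where S="{x i}", OF _ _ h]) (use f_eq[OF i] in \<open>auto simp: ifs_I_def\<close>)
  then show ?thesis by (simp add: integral_unique)
qed

lemma sum_alpha_ifs_a_less_1: "(\<Sum>i=1..N. \<alpha> i * ifs_a x N i) < 1"
proof -
  have "(\<Sum>i=1..N. \<alpha> i * ifs_a x N i) < (\<Sum>i=1..N. ifs_a x N i)"
    using alpha ifs_a_pos N_pos by (intro sum_strict_mono) (auto simp: abs_less_iff)
  then show ?thesis using sum_ifs_a by simp
qed

end

theorem mainTheorem8:
  fixes N :: nat and x :: "nat \<Rightarrow> real" and fh :: "nat \<Rightarrow> real"
    and \<alpha> :: "nat \<Rightarrow> real" and q :: "nat \<Rightarrow> real \<Rightarrow> real" and f :: "real \<Rightarrow> real"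
  assumes N: "N \<ge> 2"
    and incr: "\<And>i. 1 \<le> i \<Longrightarrow> i \<le> N \<Longrightarrow> x (i - 1) < x i"
    and alpha: "\<And>i. 1 \<le> i \<Longrightarrow> i \<le> N \<Longrightarrow> \<bar>\<alpha> i\<bar> < 1"
    and lip: "\<And>i. 1 \<le> i \<Longrightarrow> i \<le> N \<Longrightarrow> \<exists>C. C-lipschitz_on {x 0..x N} (q i)"
    and bdd: "bounded (f ` {x 0..x N})"
    and feq: "\<And>i t. 1 \<le> i \<Longrightarrow> i \<le> N \<Longrightarrow> t \<in> ifs_I x N i \<Longrightarrow>
                f t = \<alpha> i * f (ifs_Linv x N i t) + q i (ifs_Linv x N i t)"
  shows "(\<forall>i\<in>{1..N}. integral {x (i - 1)..x i} f = (x i - x (i - 1)) * fh i)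
     \<longleftrightarrow> (\<forall>i\<in>{1..N}. integral {x 0..x N} (q i) =
           ((x i - x (i - 1)) * fh i
             - \<alpha> i * ifs_a x N i * (\<Sum>j=1..N. (x j - x (j - 1)) * fh j)) / ifs_a x N i)"
proof -
  have "q i integrable_on {x 0..x N}" if "i \<in> {1..N}" for i
    using lip[of i] that
    by (auto intro: integrable_continuous_interval lipschitz_on_continuous_on)
  then interpret fractal_function x N \<alpha> q f
    using N incr alpha bdd feq by unfold_locales auto
  have "ifs_a x N i \<noteq> 0" if "i \<in> {1..N}" for i
    using ifs_a_pos[OF that] by simp
  from linear_moment_system_iff[OF finite_atLeastAtMost integral_on_ifs_piece
      integral_nodes_sum[OF f_integrable] this sum_alpha_ifs_a_less_1[THEN less_imp_neq]]
  show ?thesis .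
qed

end
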